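(* For $n\ge 2$, let $\mathcal M^{\mathrm d}(n)$ be the number of MAB pairs $(u,v)$ of binary words with $|u|=|v|=n$ and $\mathrm{lsb}(u,v)+\mathrm{lsb}(v,u)\le n$. Then $$\mathcal M^{\mathrm d}(n)=\sum_{i=1}^{n-1}\sum_{j=1}^{n-i} D(2n-2i,\,j)\,D(2i,\,i).$$
   Context: Let $\Sigma=\{a,b\}$. For a word $w$ and a letter $c$, $|w|_c$ denotes the number of occurrences of $c$ in $w$. Two words $x,y$ are abelian equivalent, written $x\sim_{\mathrm{abl}}y$, if $|x|_c=|y|_c$ for all $c\in\Sigma$. For words $u,v$: a pair $(x,y)$ is an internal abelian-border of $(u,v)$ if $x$ is a nonempty proper suffix of $u$, $y$ is a proper prefix of $v$, and $x\sim_{\mathrm{abl}}y$; it is an external abelian-border of $(u,v)$ if $x$ is a nonempty proper prefix of $u$, $y$ is a proper suffix of $v$, and $x\sim_{\mathrm{abl}}y$. The pair $(u,v)$ is mutually abelian-bordered (MAB) if it has both an internal and an external abelian-border, and mutually abelian-unbordered (MAU) if it has neither. If $(u,v)$ has an internal abelian-border, $\mathrm{sb}(u,v)$ denotes its internal abelian-border $(x,y)$ of minimal length and $\mathrm{lsb}(u,v)=|x|$ is that minimal length. A binary word $w$ of length $m$ has an abelian-border of length $k$ ($1\le k\le m-1$) if its prefix of length $k$ is abelian equivalent to its suffix of length $k$. $D(m,k)$ denotes the number of binary words of length $m$ whose shortest abelian-border has length exactly $k$. *)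

theory Defs
  imports Main "HOL-Library.Sublist"
begin

text \<open>Binary words over the alphabet {a,b} are modelled as bool lists
  (a = False, b = True).\<close>

definition abel_eq :: "bool list \<Rightarrow> bool list \<Rightarrow> bool" where
  "abel_eq x y \<longleftrightarrow> (\<forall>c. count_list x c = count_list y c)"

definition int_border :: "bool list \<Rightarrow> bool list \<Rightarrow> bool list \<Rightarrow> bool list \<Rightarrow> bool" where
  "int_border u v x y \<longleftrightarrow> x \<noteq> [] \<and> strict_suffix x u \<and> strict_prefix y v \<and> abel_eq x y"

definition ext_border :: "bool list \<Rightarrow> bool list \<Rightarrow> bool list \<Rightarrow> bool list \<Rightarrow> bool" where
  "ext_border u v x y \<longleftrightarrow> x \<noteq> [] \<and> strict_prefix x u \<and> strict_suffix y v \<and> abel_eq x y"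

definition MAB :: "bool list \<Rightarrow> bool list \<Rightarrow> bool" where
  "MAB u v \<longleftrightarrow> (\<exists>x y. int_border u v x y) \<and> (\<exists>x y. ext_border u v x y)"

definition lsb :: "bool list \<Rightarrow> bool list \<Rightarrow> nat" where
  "lsb u v = (LEAST k. \<exists>x y. int_border u v x y \<and> length x = k)"

definition abel_border :: "bool list \<Rightarrow> nat \<Rightarrow> bool" where
  "abel_border w k \<longleftrightarrow> 1 \<le> k \<and> k < length w \<and>
     abel_eq (take k w) (drop (length w - k) w)"

definition shortest_abel_border :: "bool list \<Rightarrow> nat \<Rightarrow> bool" where
  "shortest_abel_border w k \<longleftrightarrow> abel_border w k \<and> (\<forall>j<k. \<not> abel_border w j)"

definition D :: "nat \<Rightarrow> nat \<Rightarrow> nat" where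
  "D m k = card {w :: bool list. length w = m \<and> shortest_abel_border w k}"

definition Md :: "nat \<Rightarrow> nat" where
  "Md n = card {(u :: bool list, v :: bool list). length u = n \<and> length v = n \<and>
     MAB u v \<and> lsb u v + lsb v u \<le> n}"

end

theory Submission
  imports Defs
begin

text \<open>Put \<open>i = lsb(u,v)\<close> and \<open>j = lsb(v,u)\<close>, and redistribute the letters of \<open>u\<close>, \<open>v\<close> into
  \<open>w\<^sub>1\<close> = (first \<open>i\<close> letters of \<open>v\<close>)(last \<open>i\<close> letters of \<open>u\<close>) and
  \<open>w\<^sub>2\<close> = (first \<open>n - i\<close> letters of \<open>u\<close>)(last \<open>n - i\<close> letters of \<open>v\<close>); the pair \<open>(u,v)\<close> is recovered from
  \<open>i\<close>, \<open>w\<^sub>1\<close>, \<open>w\<^sub>2\<close>. For \<open>k \<le> i\<close> the internal abelian-borders of \<open>(u,v)\<close> of length \<open>k\<close> are exactly the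
  abelian-borders of \<open>w\<^sub>1\<close> of length \<open>k\<close>, and for \<open>k \<le> n - i\<close> those of \<open>(v,u)\<close> are those of \<open>w\<^sub>2\<close>.
  As \<open>j \<le> n - i\<close>, the words \<open>w\<^sub>1\<close>, \<open>w\<^sub>2\<close> have shortest abelian-borders \<open>i\<close> and \<open>j\<close>, and
  \<open>(u,v) \<mapsto> (i, j, w\<^sub>1, w\<^sub>2)\<close> is a bijection onto the quadruples counted by the sum.\<close>

lemma abel_eq_length:
  assumes "abel_eq x y"
  shows "length x = length y"
proof -
  have "length x = sum (count_list x) UNIV"
    by (simp add: sum_count_set)
  also have "\<dots> = sum (count_list y) UNIV"
    using assms unfolding abel_eq_def by simp
  also have "\<dots> = length y"
    by (simp add: sum_count_set)
  finally show ?thesis .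
qed

lemma abel_eq_sym: "abel_eq x y \<longleftrightarrow> abel_eq y x"
  unfolding abel_eq_def by metis

definition int_abel_border :: "bool list \<Rightarrow> bool list \<Rightarrow> nat \<Rightarrow> bool" where
  "int_abel_border u v k \<longleftrightarrow> 0 < k \<and> k < length u \<and> k < length v \<and>
     abel_eq (drop (length u - k) u) (take k v)"

lemma ex_int_border_iff_int_abel_border:
  "(\<exists>x y. int_border u v x y \<and> length x = k) \<longleftrightarrow> int_abel_border u v k"
proof
  assume "\<exists>x y. int_border u v x y \<and> length x = k"
  then obtain x y where "x \<noteq> []" "strict_suffix x u" "strict_prefix y v" "abel_eq x y"
    "length x = k"
    unfolding int_border_def by blast
  moreover from this have "length y = k"
    using abel_eq_length by simp
  ultimately show "int_abel_border u v k"
    unfolding int_abel_border_def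
    by (auto simp: strict_suffix_def strict_prefix_def suffix_def prefix_def
        dest: suffix_length_less prefix_length_less)
next
  assume "int_abel_border u v k"
  then have "int_border u v (drop (length u - k) u) (take k v)"
    unfolding int_abel_border_def int_border_def strict_suffix_def strict_prefix_def
    by (auto simp: suffix_drop take_is_prefix dest: arg_cong[of _ _ length])
  moreover have "length (drop (length u - k) u) = k"
    using \<open>int_abel_border u v k\<close> unfolding int_abel_border_def by simp
  ultimately show "\<exists>x y. int_border u v x y \<and> length x = k"
    by blast
qed

lemma lsb_eq_Least_int_abel_border: "lsb u v = (LEAST k. int_abel_border u v k)"
  unfolding lsb_def ex_int_border_iff_int_abel_border ..

lemma ext_border_iff_int_border: "ext_border u v x y \<longleftrightarrow> int_border v u y x"
  unfolding ext_border_def int_border_def using abel_eq_sym by (auto dest: abel_eq_length)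

lemma MAB_iff_int_abel_border:
  "MAB u v \<longleftrightarrow> (\<exists>k. int_abel_border u v k) \<and> (\<exists>k. int_abel_border v u k)"
  unfolding MAB_def ext_border_iff_int_border
  using ex_int_border_iff_int_abel_border by blast

lemma ex_and_Least_eq_iff:
  "(\<exists>k. P k) \<and> (LEAST k. P k) = (i::nat) \<longleftrightarrow> P i \<and> (\<forall>k<i. \<not> P k)"
  by (metis LeastI Least_equality not_less_Least not_le)

definition border_window :: "nat \<Rightarrow> bool list \<Rightarrow> bool list \<Rightarrow> bool list" where
  "border_window i u v = take i v @ drop (length u - i) u"

definition from_windows :: "nat \<Rightarrow> nat \<Rightarrow> bool list \<Rightarrow> bool list \<Rightarrow> bool list \<times> bool list" where
  "from_windows n i w\<^sub>1 w\<^sub>2 = (take (n - i) w\<^sub>2 @ drop i w\<^sub>1, take i w\<^sub>1 @ drop (n - i) w\<^sub>2)"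

lemma length_border_window: "i \<le> length u \<Longrightarrow> i \<le> length v \<Longrightarrow> length (border_window i u v) = 2 * i"
  unfolding border_window_def by simp

lemma abel_border_border_window_iff:
  assumes "length u = length v" "k \<le> i" "i < length u"
  shows "abel_border (border_window i u v) k \<longleftrightarrow> int_abel_border u v k"
proof -
  let ?w = "border_window i u v"
  have "take k ?w = take k v"
    using assms unfolding border_window_def by simp
  moreover have "drop (length ?w - k) ?w = drop (length u - k) u"
    using assms unfolding border_window_def by simp
  moreover have "length ?w = 2 * i"
    using assms by (simp add: length_border_window)
  ultimately show ?thesis
    using assms abel_eq_sym unfolding abel_border_def int_abel_border_def by auto
qed

lemma shortest_abel_border_border_window_iff:
  assumes "length u = length v" "k \<le> i" "i < length u"
  shows "shortest_abel_border (border_window i u v) k \<longleftrightarrow>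
    (\<exists>k. int_abel_border u v k) \<and> lsb u v = k"
  unfolding shortest_abel_border_def lsb_eq_Least_int_abel_border ex_and_Least_eq_iff
  using abel_border_border_window_iff[OF assms(1) _ assms(3)] assms(2) by auto

lemma from_windows_border_window:
  assumes "length u = n" "length v = n" "i \<le> n"
  shows "from_windows n i (border_window i u v) (border_window (n - i) v u) = (u, v)"
  using assms unfolding from_windows_def border_window_def by simp

lemma border_window_from_windows:
  assumes "length w\<^sub>1 = 2 * i" "length w\<^sub>2 = 2 * n - 2 * i" "i \<le> n"
    and "from_windows n i w\<^sub>1 w\<^sub>2 = (u, v)"
  shows "length u = n" "length v = n"
    and "border_window i u v = w\<^sub>1" "border_window (n - i) v u = w\<^sub>2"
  using assms unfolding from_windows_def border_window_def by auto

definition Md_pairs :: "nat \<Rightarrow> (bool list \<times> bool list) set" where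
  "Md_pairs n = {(u, v). length u = n \<and> length v = n \<and> MAB u v \<and> lsb u v + lsb v u \<le> n}"

definition window_pairs :: "nat \<Rightarrow> ((nat \<times> nat) \<times> bool list \<times> bool list) set" where
  "window_pairs n = (SIGMA (i, j) : (SIGMA i : {1..n-1}. {1..n-i}).
     {w. length w = 2 * i \<and> shortest_abel_border w i} \<times>
     {w. length w = 2 * n - 2 * i \<and> shortest_abel_border w j})"

definition to_windows :: "nat \<Rightarrow> bool list \<times> bool list \<Rightarrow> (nat \<times> nat) \<times> bool list \<times> bool list" where
  "to_windows n p = (case p of (u, v) \<Rightarrow>
     ((lsb u v, lsb v u), border_window (lsb u v) u v, border_window (n - lsb u v) v u))"

lemma to_windows_mem_window_pairs:
  assumes "(u, v) \<in> Md_pairs n"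
  shows "to_windows n (u, v) \<in> window_pairs n"
proof -
  have uv: "length u = n" "length v = n" "MAB u v" "lsb u v + lsb v u \<le> n"
    using assms unfolding Md_pairs_def by auto
  define i where "i = lsb u v"
  define j where "j = lsb v u"
  have "int_abel_border u v i" "int_abel_border v u j"
    using uv(3) unfolding MAB_iff_int_abel_border i_def j_def lsb_eq_Least_int_abel_border
    by (auto intro: LeastI)
  then have "0 < i" "i < n" "0 < j" "j \<le> n - i"
    using uv unfolding int_abel_border_def i_def j_def by auto
  then have "shortest_abel_border (border_window i u v) i"
    "shortest_abel_border (border_window (n - i) v u) j"
    using uv shortest_abel_border_border_window_iff MAB_iff_int_abel_border
    unfolding i_def j_def by auto
  with \<open>0 < i\<close> \<open>i < n\<close> \<open>0 < j\<close> \<open>j \<le> n - i\<close> show ?thesis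
    using uv(1,2) unfolding window_pairs_def to_windows_def i_def j_def
    by (auto simp: length_border_window)
qed

lemma from_windows_mem_Md_pairs:
  assumes "((i, j), w\<^sub>1, w\<^sub>2) \<in> window_pairs n"
  shows "from_windows n i w\<^sub>1 w\<^sub>2 \<in> Md_pairs n"
    and "to_windows n (from_windows n i w\<^sub>1 w\<^sub>2) = ((i, j), w\<^sub>1, w\<^sub>2)"
proof -
  obtain u v where uv_eq: "from_windows n i w\<^sub>1 w\<^sub>2 = (u, v)"
    by fastforce
  have i: "0 < i" "i < n" and j: "0 < j" "j \<le> n - i"
    and w\<^sub>1: "length w\<^sub>1 = 2 * i" "shortest_abel_border w\<^sub>1 i"
    and w\<^sub>2: "length w\<^sub>2 = 2 * n - 2 * i" "shortest_abel_border w\<^sub>2 j"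
    using assms unfolding window_pairs_def by auto
  note uv = border_window_from_windows[OF w\<^sub>1(1) w\<^sub>2(1) _ uv_eq]
  have "(\<exists>k. int_abel_border u v k) \<and> lsb u v = i"
    using shortest_abel_border_border_window_iff[of u v i i] uv i w\<^sub>1(2) by simp
  moreover have "(\<exists>k. int_abel_border v u k) \<and> lsb v u = j"
    using shortest_abel_border_border_window_iff[of v u j "n - i"] uv i j w\<^sub>2(2) by simp
  ultimately show "from_windows n i w\<^sub>1 w\<^sub>2 \<in> Md_pairs n"
    and "to_windows n (from_windows n i w\<^sub>1 w\<^sub>2) = ((i, j), w\<^sub>1, w\<^sub>2)"
    using MAB_iff_int_abel_border j uv i unfolding uv_eq Md_pairs_def to_windows_def by auto
qed

lemma bij_betw_to_windows: "bij_betw (to_windows n) (Md_pairs n) (window_pairs n)"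
proof (rule bij_betw_byWitness[where f' = "\<lambda>((i, j), w\<^sub>1, w\<^sub>2). from_windows n i w\<^sub>1 w\<^sub>2"])
  show "\<forall>p \<in> Md_pairs n. (\<lambda>((i, j), w\<^sub>1, w\<^sub>2). from_windows n i w\<^sub>1 w\<^sub>2) (to_windows n p) = p"
    by (auto simp: Md_pairs_def to_windows_def from_windows_border_window MAB_iff_int_abel_border)
  show "to_windows n ` Md_pairs n \<subseteq> window_pairs n"
    using to_windows_mem_window_pairs by (auto simp: Md_pairs_def)
  show "\<forall>q \<in> window_pairs n. to_windows n ((\<lambda>((i, j), w\<^sub>1, w\<^sub>2). from_windows n i w\<^sub>1 w\<^sub>2) q) = q"
    using from_windows_mem_Md_pairs by auto
  show "(\<lambda>((i, j), w\<^sub>1, w\<^sub>2). from_windows n i w\<^sub>1 w\<^sub>2) ` window_pairs n \<subseteq> Md_pairs n"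
    using from_windows_mem_Md_pairs by auto
qed

lemma finite_lists_length: "finite {w :: bool list. length w = m \<and> P w}"
  by (rule finite_subset[OF _ finite_lists_length_eq[of "UNIV :: bool set" m]]) auto

lemma card_window_pairs:
  "card (window_pairs n) = (\<Sum>i = 1..n-1. \<Sum>j = 1..n-i. D (2*i) i * D (2*n - 2*i) j)"
proof -
  have "card (window_pairs n) = (\<Sum>(i, j) \<in> (SIGMA i : {1..n-1}. {1..n-i}). D (2*i) i * D (2*n - 2*i) j)"
    unfolding window_pairs_def
    by (subst card_SigmaI)
       (auto intro!: sum.cong simp: finite_lists_length card_cartesian_product D_def split: prod.splits)
  also have "\<dots> = (\<Sum>i = 1..n-1. \<Sum>j = 1..n-i. D (2*i) i * D (2*n - 2*i) j)"
    by (subst sum.Sigma) auto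
  finally show ?thesis .
qed

theorem mainTheorem2:
  fixes n :: nat
  assumes "n \<ge> 2"
  shows "Md n = (\<Sum>i = 1..n-1. \<Sum>j = 1..n-i. D (2*n - 2*i) j * D (2*i) i)"
  unfolding Md_def Md_pairs_def[symmetric] bij_betw_same_card[OF bij_betw_to_windows] card_window_pairs
  by (simp add: mult.commute)

end
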